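(* Let $N$ be a finite group, let $\pi$ be the set of prime divisors of $|N|$, and assume that $\mathrm{Hol}(N)$ has a unique Hall $\pi$-subgroup $Q$. Let $G$ be a subgroup of $\mathrm{Hol}(N)$ and $H$ any subgroup of $G$. Then: (a) if $G$ is transitive, then $G\cap Q$ is also transitive; (b) if every prime factor of $[G:H]$ divides $|N|$, then $[G:H]=[G\cap Q:H\cap Q]$.
   Context: $\mathrm{Hol}(N)=N\rtimes\mathrm{Aut}(N)$ acts on $N$ by $(\eta,\alpha)\cdot x=\eta\,\alpha(x)$; a subgroup is transitive if it acts transitively on $N$. *)

theory Defs
  imports "HOL-Algebra.Algebra" "HOL-Computational_Algebra.Primes"
begin

text \<open>The holomorph Hol(N) = N \<rtimes> Aut(N), with elements (eta, alpha),
  eta in N, alpha an automorphism of N (as an extensional bijection of carrier N).\<close>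
definition hol :: "('a, 'b) monoid_scheme \<Rightarrow> ('a \<times> ('a \<Rightarrow> 'a)) monoid" where
  "hol N = \<lparr> carrier = carrier N \<times> auto N,
             monoid.mult = (\<lambda>(eta, alpha) (mu, beta).
                       (eta \<otimes>\<^bsub>N\<^esub> alpha mu, compose (carrier N) alpha beta)),
             one = (\<one>\<^bsub>N\<^esub>, (\<lambda>x\<in>carrier N. x)) \<rparr>"

definition hol_act :: "('a, 'b) monoid_scheme \<Rightarrow> ('a \<times> ('a \<Rightarrow> 'a)) \<Rightarrow> 'a \<Rightarrow> 'a" where
  "hol_act N g x = fst g \<otimes>\<^bsub>N\<^esub> (snd g) x"

definition transitive_on :: "('a, 'b) monoid_scheme \<Rightarrow> ('a \<times> ('a \<Rightarrow> 'a)) set \<Rightarrow> bool" where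
  "transitive_on N G \<longleftrightarrow> (\<forall>x\<in>carrier N. \<forall>y\<in>carrier N. \<exists>g\<in>G. hol_act N g x = y)"

definition prime_divs :: "nat \<Rightarrow> nat set" where
  "prime_divs n = {p. Factorial_Ring.prime (p::nat) \<and> p dvd n}"

definition hall_subgroup :: "nat set \<Rightarrow> ('c, 'd) monoid_scheme \<Rightarrow> 'c set \<Rightarrow> bool" where
  "hall_subgroup primes_set K Q \<longleftrightarrow> subgroup Q K \<and>
     (\<forall>p. Factorial_Ring.prime (p::nat) \<and> p dvd card Q \<longrightarrow> p \<in> primes_set) \<and>
     (\<forall>p. Factorial_Ring.prime (p::nat) \<and> p dvd (card (carrier K) div card Q) \<longrightarrow> p \<notin> primes_set)"

end

theory Submission
  imports Defs
begin

text \<open>Since \<open>Q\<close> is the unique Hall \<open>\<pi>\<close>-subgroup of \<open>Hol(N)\<close>, it is normal. For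
  subgroups \<open>T \<le> S\<close> the product formula \<open>|QS| |Q \<inter> S| = |Q| |S|\<close> splits the index as
  \<open>[S:T] = [QS:QT] [S \<inter> Q : T \<inter> Q]\<close>. The factor \<open>[QS:QT]\<close> divides \<open>[Hol(N):Q]\<close>, a
  \<open>\<pi>'\<close>-number, so it is \<open>1\<close> as soon as \<open>[S:T]\<close> is a \<open>\<pi>\<close>-number; this is (b).
  For (a), \<open>(\<eta>, \<alpha>) \<cdot> 1 = \<eta>\<close>, so the orbit of \<open>1\<close> under \<open>S\<close> is the image of \<open>fst\<close> and its
  stabiliser is \<open>{g \<in> S. fst g = 1}\<close>. Hence \<open>S\<close> is transitive iff this stabiliser has index
  \<open>|N|\<close> in \<open>S\<close>, a \<open>\<pi>\<close>-number, and (b) carries that index from \<open>G\<close> over to \<open>G \<inter> Q\<close>.\<close>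

definition pi_number :: "nat set \<Rightarrow> nat \<Rightarrow> bool" where
  "pi_number \<pi> n \<longleftrightarrow> (\<forall>p. Factorial_Ring.prime p \<and> p dvd n \<longrightarrow> p \<in> \<pi>)"

lemma pi_number_dvd: "pi_number \<pi> n \<Longrightarrow> m dvd n \<Longrightarrow> pi_number \<pi> m"
  unfolding pi_number_def using dvd_trans by blast

lemma pi_number_Compl_imp_eq_1: "pi_number \<pi> n \<Longrightarrow> pi_number (- \<pi>) n \<Longrightarrow> n = 1"
  unfolding pi_number_def using prime_factor_nat by blast

lemma card_eq_card_image_mult_const_fibres:
  assumes "finite A" and "\<And>y. y \<in> f ` A \<Longrightarrow> card {x\<in>A. f x = y} = c"
  shows "card A = card (f ` A) * c"
proof -
  have "card A = card (\<Union>y\<in>f ` A. {x\<in>A. f x = y})"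
    by (rule arg_cong[of _ _ card]) auto
  also have "\<dots> = (\<Sum>y\<in>f ` A. card {x\<in>A. f x = y})"
    using assms(1) by (intro card_UN_disjoint) auto
  also have "\<dots> = card (f ` A) * c"
    using assms(2) by simp
  finally show ?thesis .
qed

lemma (in group) card_subgroup_dvd:
  assumes "subgroup H G" "subgroup K G" "H \<subseteq> K"
  shows "card H dvd card K"
proof -
  interpret K: group "G\<lparr>carrier := K\<rparr>"
    using assms(2) by (rule subgroup_imp_group)
  have "subgroup H (G\<lparr>carrier := K\<rparr>)"
    using assms by (simp add: subgroup_incl)
  then have "card (rcosets\<^bsub>G\<lparr>carrier := K\<rparr>\<^esub> H) * card H = card K"
    using K.lagrange by (simp add: order_def)
  then show ?thesis
    by (metis dvd_triv_right)
qed

lemma (in normal) card_FactGroup_mult_card: "order (G Mod H) * card H = order G"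
  by (simp add: FactGroup_def lagrange order_def subgroup_axioms)

lemma (in second_isomorphism_grp) card_set_mult_mult_card_Int:
  "card (H <#> S) * card (H \<inter> S) = card H * card S"
proof -
  have is_normal: "H \<lhd> G"
    by (rule normalI[OF is_subgroup coset_eq])
  interpret HS: normal "H \<inter> S" "G\<lparr>carrier := S\<rparr>"
    using normal_Int_subgroup[OF subgrpS is_normal] .
  interpret H: normal H "G\<lparr>carrier := H <#> S\<rparr>"
    using normal_restrict_supergroup[OF normal_set_mult_subgroup is_normal H_contained_in_set_mult] .
  have S: "order (G\<lparr>carrier := S\<rparr> Mod (H \<inter> S)) * card (H \<inter> S) = card S"
    using HS.card_FactGroup_mult_card by (simp add: order_def)
  have HS: "order (G\<lparr>carrier := H <#> S\<rparr> Mod H) * card H = card (H <#> S)"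
    using H.card_FactGroup_mult_card by (simp add: order_def)
  have "order (G\<lparr>carrier := S\<rparr> Mod (H \<inter> S)) = order (G\<lparr>carrier := H <#> S\<rparr> Mod H)"
    unfolding order_def using normal_intersection_quotient_isom by (intro iso_same_card is_isoI)
  then show ?thesis
    using S HS by (metis mult.assoc mult.commute)
qed

lemma (in group) card_conjugate:
  assumes "x \<in> carrier G" "H \<subseteq> carrier G"
  shows "card (x <# H #> inv x) = card H"
proof -
  have "x <# H #> inv x = (\<lambda>h. x \<otimes> h \<otimes> inv x) ` H"
    unfolding l_coset_def r_coset_def by auto
  moreover have "inj_on (\<lambda>h. x \<otimes> h \<otimes> inv x) H"
    using assms by (intro inj_onI) (meson conjugation_is_inj subsetD)
  ultimately show ?thesis
    by (simp add: card_image)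
qed

text \<open>Being a Hall subgroup only depends on the order, so conjugates of a Hall subgroup are Hall.\<close>
lemma (in group) hall_subgroup_unique_imp_normal:
  assumes hall: "hall_subgroup \<pi> G Q" and unique: "\<forall>Q'. hall_subgroup \<pi> G Q' \<longrightarrow> Q' = Q"
  shows "Q \<lhd> G"
proof -
  have Q: "subgroup Q G"
    using hall by (simp add: hall_subgroup_def)
  have "x <# Q #> inv x = Q" if x: "x \<in> carrier G" for x
  proof -
    have "hall_subgroup \<pi> G (x <# Q #> inv x)"
      using hall subgroup_conjugation_is_surj2[OF x Q] card_conjugate[OF x subgroup.subset[OF Q]]
      by (simp add: hall_subgroup_def)
    then show ?thesis
      using unique by blast
  qed
  then show ?thesis
    using Q by (auto simp: normal_inv_iff l_coset_def r_coset_def)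
qed

lemma (in group) index_eq_index_Int_normal_hall_subgroup:
  assumes fin: "finite (carrier G)" and hall: "hall_subgroup \<pi> G Q" and normal: "Q \<lhd> G"
    and S: "subgroup S G" and T: "subgroup T G" and TS: "T \<subseteq> S"
    and pi_index: "pi_number \<pi> (card S div card T)"
  shows "card S div card T = card (S \<inter> Q) div card (T \<inter> Q)"
proof -
  interpret QS: second_isomorphism_grp Q G S
    using normal S by (simp add: second_isomorphism_grp_def second_isomorphism_grp_axioms_def)
  interpret QT: second_isomorphism_grp Q G T
    using normal T by (simp add: second_isomorphism_grp_def second_isomorphism_grp_axioms_def)
  have Q: "subgroup Q G"
    using normal by (rule normal_imp_subgroup)
  have pos: "0 < card A" if "subgroup A G" for A
    using subgroup.finite_imp_card_positive[OF that fin] .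
  have QT_QS: "Q <#> T \<subseteq> Q <#> S"
    using TS unfolding set_mult_def by blast
  obtain i where i: "card S = card T * i"
    using card_subgroup_dvd[OF T S TS] by blast
  obtain j where j: "card (S \<inter> Q) = card (T \<inter> Q) * j"
    using card_subgroup_dvd[OF subgroups_Inter_pair[OF T Q] subgroups_Inter_pair[OF S Q]] TS by blast
  obtain t where t: "card (Q <#> S) = card (Q <#> T) * t"
    using card_subgroup_dvd[OF QT.normal_set_mult_subgroup QS.normal_set_mult_subgroup QT_QS] by blast
  obtain k where k: "card (Q <#> T) = card Q * k"
    using card_subgroup_dvd[OF Q QT.normal_set_mult_subgroup QT.H_contained_in_set_mult] by blast
  obtain l where l: "order G = card (Q <#> S) * l"
    using card_subgroup_dvd[OF QS.normal_set_mult_subgroup subgroup_self subgroup.subset[OF QS.normal_set_mult_subgroup]]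
    by (auto simp: order_def)
  have "card (Q <#> T) * card (T \<inter> Q) * (t * j) = card (Q <#> T) * card (T \<inter> Q) * i"
    using QS.card_set_mult_mult_card_Int QT.card_set_mult_mult_card_Int i j t
    by (simp add: Int_commute ac_simps)
  then have ij: "i = t * j"
    using pos[OF QT.normal_set_mult_subgroup] pos[OF subgroups_Inter_pair[OF T Q]] by simp
  have "pi_number \<pi> t"
    using pi_index pi_number_dvd pos[OF T] i ij by simp
  moreover have "pi_number (- \<pi>) t"
  proof (rule pi_number_dvd)
    show "pi_number (- \<pi>) (order G div card Q)"
      using hall by (simp add: hall_subgroup_def pi_number_def order_def)
    show "t dvd order G div card Q"
      using pos[OF Q] t k l by simp
  qed
  ultimately have "t = 1"
    by (rule pi_number_Compl_imp_eq_1)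
  then show ?thesis
    using i j ij pos[OF T] pos[OF subgroups_Inter_pair[OF T Q]] by simp
qed

lemma carrier_hol: "carrier (hol N) = carrier N \<times> auto N"
  by (simp add: hol_def)

lemma one_hol: "\<one>\<^bsub>hol N\<^esub> = (\<one>\<^bsub>N\<^esub>, \<lambda>x\<in>carrier N. x)"
  by (simp add: hol_def)

lemma mult_hol: "(e, a) \<otimes>\<^bsub>hol N\<^esub> (m, b) = (e \<otimes>\<^bsub>N\<^esub> a m, compose (carrier N) a b)"
  by (simp add: hol_def)

lemma fst_mult_hol: "fst (g \<otimes>\<^bsub>hol N\<^esub> h) = hol_act N g (fst h)"
  by (cases g, cases h) (simp add: mult_hol hol_act_def)

context group
begin

lemma auto_closed: "a \<in> auto G \<Longrightarrow> x \<in> carrier G \<Longrightarrow> a x \<in> carrier G"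
  by (auto simp: auto_def hom_def)

lemma auto_mult: "a \<in> auto G \<Longrightarrow> x \<in> carrier G \<Longrightarrow> y \<in> carrier G \<Longrightarrow> a (x \<otimes> y) = a x \<otimes> a y"
  by (simp add: auto_def hom_def)

lemma auto_one: "a \<in> auto G \<Longrightarrow> a \<one> = \<one>"
  by (simp add: auto_def group_hom.hom_one group_hom_axioms_def group_hom_def is_group)

lemma carrier_AutoGroup: "carrier (AutoGroup G) = auto G"
  by (simp add: AutoGroup_def)

lemma one_AutoGroup: "\<one>\<^bsub>AutoGroup G\<^esub> = (\<lambda>x\<in>carrier G. x)"
  by (simp add: AutoGroup_def BijGroup_def)

lemma mult_AutoGroup:
  "a \<in> auto G \<Longrightarrow> b \<in> auto G \<Longrightarrow> a \<otimes>\<^bsub>AutoGroup G\<^esub> b = compose (carrier G) a b"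
  by (simp add: AutoGroup_def BijGroup_def auto_def)

lemma group_hol: "group (hol G)"
proof -
  interpret A: group "AutoGroup G"
    by (rule AutoGroup)
  have mult: "(e, a) \<otimes>\<^bsub>hol G\<^esub> (m, b) = (e \<otimes> a m, a \<otimes>\<^bsub>AutoGroup G\<^esub> b)"
    if "a \<in> auto G" "b \<in> auto G" for e a m b
    using that by (simp add: mult_hol mult_AutoGroup)
  have apply_mult: "(a \<otimes>\<^bsub>AutoGroup G\<^esub> b) x = a (b x)"
    if "a \<in> auto G" "b \<in> auto G" "x \<in> carrier G" for a b x
    using that by (simp add: mult_AutoGroup compose_def)
  have mult_closed: "a \<otimes>\<^bsub>AutoGroup G\<^esub> b \<in> auto G" if "a \<in> auto G" "b \<in> auto G" for a b
    using that A.m_closed by (simp add: carrier_AutoGroup)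
  show ?thesis
  proof (rule groupI)
    show "\<one>\<^bsub>hol G\<^esub> \<in> carrier (hol G)"
      by (simp add: carrier_hol one_hol id_in_auto)
  next
    fix x y assume "x \<in> carrier (hol G)" "y \<in> carrier (hol G)"
    then show "x \<otimes>\<^bsub>hol G\<^esub> y \<in> carrier (hol G)"
      by (auto simp: carrier_hol mult mult_closed auto_closed)
  next
    fix x y z assume "x \<in> carrier (hol G)" "y \<in> carrier (hol G)" "z \<in> carrier (hol G)"
    then show "x \<otimes>\<^bsub>hol G\<^esub> y \<otimes>\<^bsub>hol G\<^esub> z = x \<otimes>\<^bsub>hol G\<^esub> (y \<otimes>\<^bsub>hol G\<^esub> z)"
      using A.m_assoc
      by (auto simp: carrier_hol mult mult_closed carrier_AutoGroup auto_closed auto_mult apply_mult m_assoc)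
  next
    fix x assume "x \<in> carrier (hol G)"
    then obtain e a where x: "x = (e, a)" "e \<in> carrier G" "a \<in> auto G"
      by (auto simp: carrier_hol)
    have "\<one>\<^bsub>hol G\<^esub> = (\<one>, \<one>\<^bsub>AutoGroup G\<^esub>)" "\<one>\<^bsub>AutoGroup G\<^esub> e = e"
      using x by (simp_all add: one_hol one_AutoGroup)
    then show "\<one>\<^bsub>hol G\<^esub> \<otimes>\<^bsub>hol G\<^esub> x = x"
      using x A.one_closed A.l_one by (simp add: mult carrier_AutoGroup)
  next
    fix x assume "x \<in> carrier (hol G)"
    then obtain e a where x: "x = (e, a)" "e \<in> carrier G" "a \<in> auto G"
      by (auto simp: carrier_hol)
    let ?a' = "inv\<^bsub>AutoGroup G\<^esub> a"
    have a': "?a' \<in> auto G"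
      using x A.inv_closed by (simp add: carrier_AutoGroup)
    have "(?a' (inv e), ?a') \<otimes>\<^bsub>hol G\<^esub> x = \<one>\<^bsub>hol G\<^esub>"
      using x a' A.l_inv
      by (simp add: mult one_hol one_AutoGroup carrier_AutoGroup auto_mult[symmetric] auto_one)
    moreover have "(?a' (inv e), ?a') \<in> carrier (hol G)"
      using x a' by (simp add: carrier_hol auto_closed)
    ultimately show "\<exists>y\<in>carrier (hol G). y \<otimes>\<^bsub>hol G\<^esub> x = \<one>\<^bsub>hol G\<^esub>"
      by blast
  qed
qed

lemma finite_hol: "finite (carrier G) \<Longrightarrow> finite (carrier (hol G))"
proof -
  assume fin: "finite (carrier G)"
  have "auto G \<subseteq> carrier G \<rightarrow>\<^sub>E carrier G"
    unfolding auto_def PiE_def using Bij_imp_funcset Bij_imp_extensional by blast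
  then have "finite (auto G)"
    using fin by (meson finite_PiE finite_subset)
  then show ?thesis
    using fin by (simp add: carrier_hol)
qed

lemma hol_act_one_eq_fst: "g \<in> carrier (hol G) \<Longrightarrow> hol_act G g \<one> = fst g"
  by (auto simp: hol_act_def carrier_hol auto_one)

lemma fst_hol_closed: "g \<in> carrier (hol G) \<Longrightarrow> fst g \<in> carrier G"
  by (auto simp: carrier_hol)

lemma inj_on_hol_act:
  assumes "g \<in> carrier (hol G)"
  shows "inj_on (hol_act G g) (carrier G)"
proof -
  obtain e a where g: "g = (e, a)" "e \<in> carrier G" "a \<in> auto G"
    using assms by (auto simp: carrier_hol)
  then have "inj_on a (carrier G)"
    by (simp add: auto_def Bij_def bij_betw_def)
  then show ?thesis
    using g by (auto simp: inj_on_def hol_act_def auto_closed)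
qed

lemma fst_inv_mult_hol_eq_one_iff:
  assumes "g \<in> carrier (hol G)" "h \<in> carrier (hol G)"
  shows "fst (inv\<^bsub>hol G\<^esub> g \<otimes>\<^bsub>hol G\<^esub> h) = \<one> \<longleftrightarrow> fst h = fst g"
proof -
  interpret K: group "hol G"
    by (rule group_hol)
  have "\<one> = fst (inv\<^bsub>hol G\<^esub> g \<otimes>\<^bsub>hol G\<^esub> g)"
    using assms by (simp add: one_hol)
  then have "fst (inv\<^bsub>hol G\<^esub> g \<otimes>\<^bsub>hol G\<^esub> h) = \<one> \<longleftrightarrow>
      hol_act G (inv\<^bsub>hol G\<^esub> g) (fst h) = hol_act G (inv\<^bsub>hol G\<^esub> g) (fst g)"
    by (simp add: fst_mult_hol)
  also have "\<dots> \<longleftrightarrow> fst h = fst g"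
    using assms by (simp add: inj_on_eq_iff[OF inj_on_hol_act] fst_hol_closed)
  finally show ?thesis .
qed

lemma subgroup_hol_stabilizer:
  assumes S: "subgroup S (hol G)"
  shows "subgroup {g \<in> S. fst g = \<one>} (hol G)"
proof -
  interpret K: group "hol G"
    by (rule group_hol)
  have carrier: "g \<in> carrier (hol G)" if "g \<in> S" for g
    using that subgroup.subset[OF S] by blast
  show ?thesis
  proof (rule K.subgroupI)
    show "{g \<in> S. fst g = \<one>} \<subseteq> carrier (hol G)"
      using carrier by blast
    show "{g \<in> S. fst g = \<one>} \<noteq> {}"
      using subgroup.one_closed[OF S] by (auto simp: one_hol)
  next
    fix g assume g: "g \<in> {g \<in> S. fst g = \<one>}"
    then have "fst (inv\<^bsub>hol G\<^esub> g \<otimes>\<^bsub>hol G\<^esub> \<one>\<^bsub>hol G\<^esub>) = \<one>"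
      using fst_inv_mult_hol_eq_one_iff[of g "\<one>\<^bsub>hol G\<^esub>"] carrier K.one_closed by (simp add: one_hol)
    then show "inv\<^bsub>hol G\<^esub> g \<in> {g \<in> S. fst g = \<one>}"
      using g carrier subgroup.m_inv_closed[OF S] by simp
  next
    fix g h assume "g \<in> {g \<in> S. fst g = \<one>}" "h \<in> {g \<in> S. fst g = \<one>}"
    then show "g \<otimes>\<^bsub>hol G\<^esub> h \<in> {g \<in> S. fst g = \<one>}"
      using carrier subgroup.m_closed[OF S] by (simp add: fst_mult_hol hol_act_one_eq_fst)
  qed
qed

text \<open>The fibres of \<open>fst\<close> on \<open>S\<close> are the left cosets of the stabiliser of \<open>\<one>\<close>.\<close>
lemma card_subgroup_hol_orbit_stabilizer:
  assumes fin: "finite (carrier G)" and S: "subgroup S (hol G)"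
  shows "card S = card (fst ` S) * card {g \<in> S. fst g = \<one>}"
proof (rule card_eq_card_image_mult_const_fibres)
  interpret K: group "hol G"
    by (rule group_hol)
  have carrier: "g \<in> carrier (hol G)" if "g \<in> S" for g
    using that subgroup.subset[OF S] by blast
  show "finite S"
    using finite_hol[OF fin] subgroup.subset[OF S] finite_subset by blast
  fix y assume "y \<in> fst ` S"
  then obtain g where g: "g \<in> S" "fst g = y"
    by blast
  have g_carrier: "g \<in> carrier (hol G)"
    using carrier[OF g(1)] .
  have "bij_betw (\<lambda>h. g \<otimes>\<^bsub>hol G\<^esub> h) {h \<in> S. fst h = \<one>} {h \<in> S. fst h = y}"
  proof (rule bij_betw_byWitness[where f' = "\<lambda>h. inv\<^bsub>hol G\<^esub> g \<otimes>\<^bsub>hol G\<^esub> h"])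
    show "\<forall>h \<in> {h \<in> S. fst h = \<one>}. inv\<^bsub>hol G\<^esub> g \<otimes>\<^bsub>hol G\<^esub> (g \<otimes>\<^bsub>hol G\<^esub> h) = h"
      using g carrier by (simp add: K.m_assoc[symmetric])
    show "\<forall>h \<in> {h \<in> S. fst h = y}. g \<otimes>\<^bsub>hol G\<^esub> (inv\<^bsub>hol G\<^esub> g \<otimes>\<^bsub>hol G\<^esub> h) = h"
      using g carrier by (simp add: K.m_assoc[symmetric])
    show "(\<lambda>h. g \<otimes>\<^bsub>hol G\<^esub> h) ` {h \<in> S. fst h = \<one>} \<subseteq> {h \<in> S. fst h = y}"
    proof (rule image_subsetI)
      fix h assume "h \<in> {h \<in> S. fst h = \<one>}"
      then show "g \<otimes>\<^bsub>hol G\<^esub> h \<in> {h \<in> S. fst h = y}"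
        using g g_carrier subgroup.m_closed[OF S] by (simp add: fst_mult_hol hol_act_one_eq_fst)
    qed
    show "(\<lambda>h. inv\<^bsub>hol G\<^esub> g \<otimes>\<^bsub>hol G\<^esub> h) ` {h \<in> S. fst h = y} \<subseteq> {h \<in> S. fst h = \<one>}"
    proof (rule image_subsetI)
      fix h assume "h \<in> {h \<in> S. fst h = y}"
      then show "inv\<^bsub>hol G\<^esub> g \<otimes>\<^bsub>hol G\<^esub> h \<in> {h \<in> S. fst h = \<one>}"
        using g g_carrier carrier subgroup.m_closed[OF S] subgroup.m_inv_closed[OF S]
        by (simp add: fst_inv_mult_hol_eq_one_iff)
    qed
  qed
  then show "card {h \<in> S. fst h = y} = card {g \<in> S. fst g = \<one>}"
    by (simp add: bij_betw_same_card)
qed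

lemma transitive_on_iff_fst_image:
  assumes S: "subgroup S (hol G)"
  shows "transitive_on G S \<longleftrightarrow> fst ` S = carrier G"
proof
  interpret K: group "hol G"
    by (rule group_hol)
  have carrier: "g \<in> carrier (hol G)" if "g \<in> S" for g
    using that subgroup.subset[OF S] by blast
  have fst_S: "fst ` S \<subseteq> carrier G"
    using carrier fst_hol_closed by blast
  show "fst ` S = carrier G" if transitive: "transitive_on G S"
  proof (intro equalityI fst_S subsetI)
    fix y assume "y \<in> carrier G"
    then obtain g where "g \<in> S" "hol_act G g \<one> = y"
      using transitive one_closed unfolding transitive_on_def by blast
    then show "y \<in> fst ` S"
      using carrier by (metis hol_act_one_eq_fst image_eqI)
  qed
  show "transitive_on G S" if fst_image: "fst ` S = carrier G"
    unfolding transitive_on_def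
  proof (intro ballI)
    fix x y assume "x \<in> carrier G" "y \<in> carrier G"
    then obtain g h where g: "g \<in> S" "fst g = x" and h: "h \<in> S" "fst h = y"
      using fst_image by (metis imageE)
    let ?k = "h \<otimes>\<^bsub>hol G\<^esub> inv\<^bsub>hol G\<^esub> g"
    have "hol_act G ?k x = fst (?k \<otimes>\<^bsub>hol G\<^esub> g)"
      using g by (simp add: fst_mult_hol)
    also have "\<dots> = y"
      using g h carrier by (simp add: K.m_assoc)
    finally show "\<exists>k \<in> S. hol_act G k x = y"
      using g h subgroup.m_closed[OF S] subgroup.m_inv_closed[OF S] by blast
  qed
qed

lemma transitive_on_iff_index_stabilizer:
  assumes fin: "finite (carrier G)" and S: "subgroup S (hol G)"
  shows "transitive_on G S \<longleftrightarrow> card S div card {g \<in> S. fst g = \<one>} = order G"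
proof -
  have "0 < card {g \<in> S. fst g = \<one>}"
    using subgroup.finite_imp_card_positive[OF subgroup_hol_stabilizer[OF S] finite_hol[OF fin]] .
  then have "card S div card {g \<in> S. fst g = \<one>} = card (fst ` S)"
    using card_subgroup_hol_orbit_stabilizer[OF fin S] by simp
  moreover have "fst ` S = carrier G \<longleftrightarrow> card (fst ` S) = order G"
  proof -
    have "fst ` S \<subseteq> carrier G"
      using subgroup.subset[OF S] by (auto simp: carrier_hol)
    then show ?thesis
      using fin by (metis card_subset_eq order_def)
  qed
  ultimately show ?thesis
    using transitive_on_iff_fst_image[OF S] by simp
qed

end

theorem lemma2p1:
  fixes N :: "('a, 'b) monoid_scheme"
    and Q G H :: "('a \<times> ('a \<Rightarrow> 'a)) set"
  assumes "group N" and "finite (carrier N)"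
    and "hall_subgroup (prime_divs (order N)) (hol N) Q"
    and "\<forall>Q'. hall_subgroup (prime_divs (order N)) (hol N) Q' \<longrightarrow> Q' = Q"
    and "subgroup G (hol N)" and "subgroup H (hol N)" and "H \<subseteq> G"
  shows "(transitive_on N G \<longrightarrow> transitive_on N (G \<inter> Q))
       \<and> ((\<forall>p. Factorial_Ring.prime (p::nat) \<and> p dvd (card G div card H) \<longrightarrow> p dvd order N)
           \<longrightarrow> card G div card H = card (G \<inter> Q) div card (H \<inter> Q))"
proof -
  note fin = assms(2) and hall = assms(3) and G = assms(5)
  interpret N: group N by (rule assms(1))
  interpret K: group "hol N" by (rule N.group_hol)
  have "Q \<lhd> hol N"
    using K.hall_subgroup_unique_imp_normal[OF hall assms(4)] .
  then have index: "card S div card T = card (S \<inter> Q) div card (T \<inter> Q)"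
    if "subgroup S (hol N)" "subgroup T (hol N)" "T \<subseteq> S"
      "pi_number (prime_divs (order N)) (card S div card T)" for S T
    using K.index_eq_index_Int_normal_hall_subgroup[OF N.finite_hol[OF fin] hall _ that] by blast
  have "transitive_on N (G \<inter> Q)" if "transitive_on N G"
  proof -
    let ?G\<^sub>1 = "{g \<in> G. fst g = \<one>\<^bsub>N\<^esub>}"
    have G\<^sub>1: "subgroup ?G\<^sub>1 (hol N)"
      using N.subgroup_hol_stabilizer[OF G] .
    have "card G div card ?G\<^sub>1 = order N"
      using that N.transitive_on_iff_index_stabilizer[OF fin G] by simp
    then have "card (G \<inter> Q) div card (?G\<^sub>1 \<inter> Q) = order N"
      using index[OF G G\<^sub>1] by (auto simp: pi_number_def prime_divs_def)
    moreover have "{g \<in> G \<inter> Q. fst g = \<one>\<^bsub>N\<^esub>} = ?G\<^sub>1 \<inter> Q"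
      by blast
    moreover have "subgroup (G \<inter> Q) (hol N)"
      using G hall by (simp add: K.subgroups_Inter_pair hall_subgroup_def)
    ultimately show ?thesis
      using N.transitive_on_iff_index_stabilizer[OF fin] by simp
  qed
  moreover have "(\<forall>p. Factorial_Ring.prime p \<and> p dvd (card G div card H) \<longrightarrow> p dvd order N)
      \<Longrightarrow> card G div card H = card (G \<inter> Q) div card (H \<inter> Q)"
    using index[OF G assms(6,7)] by (simp add: pi_number_def prime_divs_def)
  ultimately show ?thesis
    by blast
qed

end
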